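(* For every $X\in\{\mathsf{T},\mathsf{S}\}^*$ and every initial preference formula, $\succ_{X\mathsf{T}}\subseteq\succ_{X\mathsf{T}\mathsf{S}\mathsf{T}}$.
   Context: Fix attribute–taxonomy pairs $A_1{:}T_1,\dots,A_d{:}T_d$ with distinct attribute names, where each taxonomy $T_i=(V_i,\le_{V_i})$ is a poset. A t-tuple over a t-schema $S\subseteq\{A_1{:}T_1,\dots,A_d{:}T_d\}$ maps each $A_i$ in $S$ to a value of $V_i$; $\mathcal{D}$ is the set of all t-tuples over all such t-schemas. A preference relation is a binary relation $\succeq$ on $\mathcal{D}$; its strict part is $t_1\succ t_2$ iff $t_1\succeq t_2$ and not $t_2\succeq t_1$. Preferences are given by a formula $F(x,y)=\bigvee_i P_i(x,y)$, a disjunction of statements; each statement $P_i$ is a disjunction of clauses, each clause a satisfiable conjunction of atoms of the forms $x[A_i]\le_{V_i} v$, $x[A_i]\not\le_{V_i} v$, $y[A_i]\le_{V_i} v$, $y[A_i]\not\le_{V_i} v$; the formula induces $t_1\succeq t_2\iff F(t_1,t_2)$. Operator $\mathsf{T}$ maps a formula to one inducing the transitive closure over $\mathcal{D}$ of the induced relation. Operator $\mathsf{S}$ (specificity-based refinement): repeat rounds; in a round, for each statement $P_i$ let $\mathrm{Impl}(P_i)$ be the set of statements $P_j$ such that $P_j(t_2,t_1)\Rightarrow P_i(t_1,t_2)$ for all $t_1,t_2\in\mathcal{D}$ but not conversely; simultaneously replace every $P_i$ with nonempty $\mathrm{Impl}(P_i)$ by $P_i(x,y)\wedge\bigwedge_{P_j\in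 \mathrm{Impl}(P_i)}\neg P_j(y,x)$; stop when no $\mathrm{Impl}$ set is nonempty. After each operator, contradictory clauses and subsumed statements are removed. For $X\in\{\mathsf{T},\mathsf{S}\}^*$, $\succeq_X$ (strict part $\succ_X$) is the relation induced by applying the operators of $X$ in order to the initial formula. *)

theory Defs
  imports Main
begin

(* Attribute names have type 'a, taxonomy values have type 'v.
   Attrs = {A_1,...,A_d}; V A = value set of taxonomy of A; le A = its order. *)

definition taxonomies :: "'a set \<Rightarrow> ('a \<Rightarrow> 'v set) \<Rightarrow> ('a \<Rightarrow> 'v \<Rightarrow> 'v \<Rightarrow> bool) \<Rightarrow> bool" where
  "taxonomies Attrs V le \<longleftrightarrow> finite Attrs \<and>
     (\<forall>A\<in>Attrs. (\<forall>x\<in>V A. le A x x)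
        \<and> (\<forall>x\<in>V A. \<forall>y\<in>V A. le A x y \<and> le A y x \<longrightarrow> x = y)
        \<and> (\<forall>x\<in>V A. \<forall>y\<in>V A. \<forall>z\<in>V A. le A x y \<longrightarrow> le A y z \<longrightarrow> le A x z))"

type_synonym ('a,'v) ttuple = "'a \<Rightarrow> 'v option"

(* the set D of all t-tuples over all t-schemas S \<subseteq> Attrs *)
definition tuples :: "'a set \<Rightarrow> ('a \<Rightarrow> 'v set) \<Rightarrow> ('a,'v) ttuple set" where
  "tuples Attrs V = {t. dom t \<subseteq> Attrs \<and> (\<forall>A w. t A = Some w \<longrightarrow> w \<in> V A)}"

datatype ('a,'v) atom = XLe 'a 'v | XNLe 'a 'v | YLe 'a 'v | YNLe 'a 'v

type_synonym ('a,'v) clause = "('a,'v) atom list"      (* conjunction of atoms *)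
type_synonym ('a,'v) stmt = "('a,'v) clause list"      (* disjunction of clauses *)
type_synonym ('a,'v) formula = "('a,'v) stmt list"     (* disjunction of statements *)

fun atom_attr :: "('a,'v) atom \<Rightarrow> 'a" where
  "atom_attr (XLe A v) = A" | "atom_attr (XNLe A v) = A"
| "atom_attr (YLe A v) = A" | "atom_attr (YNLe A v) = A"

fun atom_val :: "('a,'v) atom \<Rightarrow> 'v" where
  "atom_val (XLe A v) = v" | "atom_val (XNLe A v) = v"
| "atom_val (YLe A v) = v" | "atom_val (YNLe A v) = v"

fun sem_atom :: "('a \<Rightarrow> 'v \<Rightarrow> 'v \<Rightarrow> bool) \<Rightarrow> ('a,'v) atom \<Rightarrow> ('a,'v) ttuple \<Rightarrow> ('a,'v) ttuple \<Rightarrow> bool" where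
  "sem_atom le (XLe A v) x y = (\<exists>w. x A = Some w \<and> le A w v)"
| "sem_atom le (XNLe A v) x y = (\<not> (\<exists>w. x A = Some w \<and> le A w v))"
| "sem_atom le (YLe A v) x y = (\<exists>w. y A = Some w \<and> le A w v)"
| "sem_atom le (YNLe A v) x y = (\<not> (\<exists>w. y A = Some w \<and> le A w v))"

definition holds_clause where
  "holds_clause le c x y = (\<forall>a\<in>set c. sem_atom le a x y)"

definition holds_stmt where
  "holds_stmt le P x y = (\<exists>c\<in>set P. holds_clause le c x y)"

definition holds_formula where
  "holds_formula le F x y = (\<exists>P\<in>set F. holds_stmt le P x y)"

definition induced :: "'a set \<Rightarrow> ('a \<Rightarrow> 'v set) \<Rightarrow> ('a \<Rightarrow> 'v \<Rightarrow> 'v \<Rightarrow> bool)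
    \<Rightarrow> ('a,'v) formula \<Rightarrow> (('a,'v) ttuple \<times> ('a,'v) ttuple) set" where
  "induced Attrs V le F = {(x,y). x \<in> tuples Attrs V \<and> y \<in> tuples Attrs V \<and> holds_formula le F x y}"

definition strict_part :: "('b \<times> 'b) set \<Rightarrow> ('b \<times> 'b) set" where
  "strict_part R = {(x,y). (x,y) \<in> R \<and> (y,x) \<notin> R}"

definition sat_clause where
  "sat_clause Attrs V le c = (\<exists>x\<in>tuples Attrs V. \<exists>y\<in>tuples Attrs V. holds_clause le c x y)"

definition atoms_ok :: "'a set \<Rightarrow> ('a \<Rightarrow> 'v set) \<Rightarrow> ('a,'v) formula \<Rightarrow> bool" where
  "atoms_ok Attrs V F = (\<forall>P\<in>set F. \<forall>c\<in>set P. \<forall>a\<in>set c.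
      atom_attr a \<in> Attrs \<and> atom_val a \<in> V (atom_attr a))"

definition wf_formula where
  "wf_formula Attrs V le F = (atoms_ok Attrs V F \<and> (\<forall>P\<in>set F. \<forall>c\<in>set P. sat_clause Attrs V le c))"

fun swap_atom :: "('a,'v) atom \<Rightarrow> ('a,'v) atom" where
  "swap_atom (XLe A v) = YLe A v" | "swap_atom (XNLe A v) = YNLe A v"
| "swap_atom (YLe A v) = XLe A v" | "swap_atom (YNLe A v) = XNLe A v"

fun neg_atom :: "('a,'v) atom \<Rightarrow> ('a,'v) atom" where
  "neg_atom (XLe A v) = XNLe A v" | "neg_atom (XNLe A v) = XLe A v"
| "neg_atom (YLe A v) = YNLe A v" | "neg_atom (YNLe A v) = YLe A v"

(* conjunction of two statements, in disjunctive normal form *)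
definition conj_stmt :: "('a,'v) stmt \<Rightarrow> ('a,'v) stmt \<Rightarrow> ('a,'v) stmt" where
  "conj_stmt P Q = concat (map (\<lambda>c. map (\<lambda>d. c @ d) Q) P)"

(* DNF of  \<not> P(y,x) *)
definition neg_swap_stmt :: "('a,'v) stmt \<Rightarrow> ('a,'v) stmt" where
  "neg_swap_stmt P = foldr (\<lambda>c acc. conj_stmt (map (\<lambda>a. [neg_atom (swap_atom a)]) c) acc) P [[]]"

definition stmt_imp where
  "stmt_imp Attrs V le P Q = (\<forall>x\<in>tuples Attrs V. \<forall>y\<in>tuples Attrs V.
      holds_stmt le P x y \<longrightarrow> holds_stmt le Q x y)"

definition in_impl where
  "in_impl Attrs V le Pi Pj =
     ((\<forall>x\<in>tuples Attrs V. \<forall>y\<in>tuples Attrs V. holds_stmt le Pj y x \<longrightarrow> holds_stmt le Pi x y)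
      \<and> \<not> (\<forall>x\<in>tuples Attrs V. \<forall>y\<in>tuples Attrs V. holds_stmt le Pi x y \<longrightarrow> holds_stmt le Pj y x))"

definition impl_list where
  "impl_list Attrs V le F Pi = filter (in_impl Attrs V le Pi) F"

definition refine_stmt :: "('a,'v) stmt \<Rightarrow> ('a,'v) stmt list \<Rightarrow> ('a,'v) stmt" where
  "refine_stmt P Js = foldl (\<lambda>acc Pj. conj_stmt acc (neg_swap_stmt Pj)) P Js"

(* one round of S: simultaneous replacement *)
definition s_round where
  "s_round Attrs V le F =
     map (\<lambda>P. if impl_list Attrs V le F P = [] then P else refine_stmt P (impl_list Attrs V le F P)) F"

definition s_stable where
  "s_stable Attrs V le F = (\<forall>P\<in>set F. impl_list Attrs V le F P = [])"

definition clean_clauses where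
  "clean_clauses Attrs V le F = map (filter (sat_clause Attrs V le)) F"

definition remove_subsumed where
  "remove_subsumed Attrs V le F =
     map (\<lambda>i. F ! i)
       (filter (\<lambda>i. \<not> (\<exists>k<length F. stmt_imp Attrs V le (F ! i) (F ! k)
                     \<and> (\<not> stmt_imp Attrs V le (F ! k) (F ! i) \<or> k < i)))
          [0..<length F])"

definition cleanup where
  "cleanup Attrs V le F = remove_subsumed Attrs V le (clean_clauses Attrs V le F)"

definition T_step where
  "T_step Attrs V le F G = (\<exists>H. atoms_ok Attrs V H
      \<and> induced Attrs V le H = trancl (induced Attrs V le F)
      \<and> G = cleanup Attrs V le H)"

definition S_step where
  "S_step Attrs V le F G = (\<exists>n. s_stable Attrs V le ((s_round Attrs V le ^^ n) F)
      \<and> G = cleanup Attrs V le ((s_round Attrs V le ^^ n) F))"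

datatype op = OpT | OpS

fun op_step where
  "op_step Attrs V le OpT F G = T_step Attrs V le F G"
| "op_step Attrs V le OpS F G = S_step Attrs V le F G"

inductive apply_ops for Attrs V le where
  ao_nil: "apply_ops Attrs V le [] F F"
| ao_snoc: "apply_ops Attrs V le X F G \<Longrightarrow> op_step Attrs V le p G H \<Longrightarrow> apply_ops Attrs V le (X @ [p]) F H"

end

theory Submission
  imports Defs
begin

text \<open>The relation R induced after T is transitive. A round of S only strengthens a statement
P(x,y) by conjuncts \<not> P_j(y,x) with P_j in the current formula, so the induced relation never
grows beyond R; and on a pair (x,y) in the strict part of R each such conjunct holds, because the
current formula only holds on pairs of R and (y,x) \<notin> R. Hence the relation R' induced after S
satisfies strict(R) \<subseteq> R' \<subseteq> R, and taking the transitive closure again gives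
strict(R) \<subseteq> R'^+ \<subseteq> R, so every strict pair of R stays strict.\<close>

lemma trans_strict_part_subset_trancl:
  assumes "trans R" and "strict_part R \<subseteq> R'" and "R' \<subseteq> R"
  shows "strict_part R \<subseteq> strict_part (R'\<^sup>+)"
proof -
  have "R'\<^sup>+ \<subseteq> R"
    using trancl_mono[OF _ assms(3)] trancl_id[OF assms(1)] by blast
  then show ?thesis
    using assms(2) unfolding strict_part_def by blast
qed

lemma holds_clause_append [simp]:
  "holds_clause le (c @ d) x y \<longleftrightarrow> holds_clause le c x y \<and> holds_clause le d x y"
  unfolding holds_clause_def by auto

lemma holds_conj_stmt [simp]:
  "holds_stmt le (conj_stmt P Q) x y \<longleftrightarrow> holds_stmt le P x y \<and> holds_stmt le Q x y"
  unfolding holds_stmt_def conj_stmt_def by auto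

lemma sem_atom_neg_swap [simp]:
  "sem_atom le (neg_atom (swap_atom a)) x y \<longleftrightarrow> \<not> sem_atom le a y x"
  by (cases a) auto

lemma holds_neg_swap_clause:
  "holds_stmt le (map (\<lambda>a. [neg_atom (swap_atom a)]) c) x y \<longleftrightarrow> \<not> holds_clause le c y x"
  unfolding holds_stmt_def holds_clause_def by auto

lemma holds_neg_swap_stmt [simp]:
  "holds_stmt le (neg_swap_stmt P) x y \<longleftrightarrow> \<not> holds_stmt le P y x"
proof (induction P)
  case Nil
  show ?case by (simp add: neg_swap_stmt_def holds_stmt_def holds_clause_def)
next
  case (Cons c P)
  have "neg_swap_stmt (c # P) =
      conj_stmt (map (\<lambda>a. [neg_atom (swap_atom a)]) c) (neg_swap_stmt P)"
    by (simp add: neg_swap_stmt_def)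
  then show ?case
    using Cons by (simp only: holds_conj_stmt holds_neg_swap_clause) (simp add: holds_stmt_def)
qed

lemma holds_refine_stmt:
  "holds_stmt le (refine_stmt P Js) x y \<longleftrightarrow>
     holds_stmt le P x y \<and> (\<forall>Pj\<in>set Js. \<not> holds_stmt le Pj y x)"
  unfolding refine_stmt_def by (induction Js arbitrary: P) auto

lemma induced_clean_clauses:
  "induced Attrs V le (clean_clauses Attrs V le F) = induced Attrs V le F"
  unfolding induced_def holds_formula_def clean_clauses_def holds_stmt_def sat_clause_def
  by auto

text \<open>Among the indices of a finite preorder, the ones kept by remove_subsumed are the
maximal elements that have least index in their equivalence class; every index lies below one
of them. The induction decreases the number of strictly greater indices, and for equivalent
indices the index itself.\<close>

lemma preorder_below_unsubsumed_index:
  fixes r :: "nat \<Rightarrow> nat \<Rightarrow> bool"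
  assumes refl: "\<And>i. r i i" and trans: "\<And>i j k. r i j \<Longrightarrow> r j k \<Longrightarrow> r i k"
    and "i < n"
  shows "\<exists>j<n. r i j \<and> \<not> (\<exists>k<n. r j k \<and> (\<not> r k j \<or> k < j))"
proof -
  define above where "above i = {j. j < n \<and> r i j \<and> \<not> r j i}" for i
  define R where "R = inv_image (less_than <*lex*> less_than) (\<lambda>i. (card (above i), i))"
  have "wf R" unfolding R_def by auto
  then show ?thesis using \<open>i < n\<close>
  proof (induction i rule: wf_induct_rule)
    case (less i)
    show ?case
    proof (cases "\<exists>k<n. r i k \<and> (\<not> r k i \<or> k < i)")
      case False
      then show ?thesis using less.prems refl by blast
    next
      case True
      then obtain k where k: "k < n" "r i k" "\<not> r k i \<or> k < i" by blast
      have "(k, i) \<in> R"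
      proof (cases "r k i")
        case False
        have "above k \<subseteq> above i" unfolding above_def using trans k(2) False by blast
        moreover have "k \<in> above i" "k \<notin> above k" unfolding above_def using k False refl by auto
        ultimately have "above k \<subset> above i" by blast
        then have "card (above k) < card (above i)"
          by (rule psubset_card_mono[rotated]) (simp add: above_def)
        then show ?thesis unfolding R_def by simp
      next
        case True
        have "above k = above i" unfolding above_def using trans k(2) True by blast
        then show ?thesis unfolding R_def using k(3) True by simp
      qed
      then obtain j where "j < n" "r k j" "\<not> (\<exists>k'<n. r j k' \<and> (\<not> r k' j \<or> k' < j))"
        using less.IH k(1) by blast
      then show ?thesis using trans k(2) by blast
    qed
  qed
qed

lemma induced_remove_subsumed:
  "induced Attrs V le (remove_subsumed Attrs V le F) = induced Attrs V le F"
proof -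
  have "holds_formula le F x y \<Longrightarrow> holds_formula le (remove_subsumed Attrs V le F) x y"
    if "x \<in> tuples Attrs V" "y \<in> tuples Attrs V" for x y
  proof -
    assume "holds_formula le F x y"
    then obtain i where i: "i < length F" "holds_stmt le (F ! i) x y"
      unfolding holds_formula_def by (metis in_set_conv_nth)
    let ?r = "\<lambda>i k. stmt_imp Attrs V le (F ! i) (F ! k)"
    have "?r i i" for i unfolding stmt_imp_def by blast
    moreover have "?r i k" if "?r i j" "?r j k" for i j k
      using that unfolding stmt_imp_def by blast
    ultimately obtain j where j: "j < length F" "?r i j"
        "\<not> (\<exists>k<length F. ?r j k \<and> (\<not> ?r k j \<or> k < j))"
      using preorder_below_unsubsumed_index[of ?r, OF _ _ i(1)] by blast
    have "holds_stmt le (F ! j) x y" using j(2) i(2) that unfolding stmt_imp_def by blast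
    moreover have "F ! j \<in> set (remove_subsumed Attrs V le F)"
      unfolding remove_subsumed_def using j(1,3) by auto
    ultimately show ?thesis unfolding holds_formula_def by blast
  qed
  moreover have "holds_formula le (remove_subsumed Attrs V le F) x y \<Longrightarrow> holds_formula le F x y"
    for x y
    unfolding holds_formula_def remove_subsumed_def by auto
  ultimately show ?thesis unfolding induced_def by blast
qed

lemma induced_cleanup: "induced Attrs V le (cleanup Attrs V le F) = induced Attrs V le F"
  unfolding cleanup_def induced_remove_subsumed induced_clean_clauses ..

lemma T_step_induced:
  "T_step Attrs V le F G \<Longrightarrow> induced Attrs V le G = (induced Attrs V le F)\<^sup>+"
  unfolding T_step_def using induced_cleanup by metis

lemma holds_s_round_imp:
  "holds_formula le (s_round Attrs V le F) x y \<Longrightarrow> holds_formula le F x y"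
  unfolding s_round_def holds_formula_def
  by (fastforce simp: holds_refine_stmt split: if_splits)

lemma holds_s_round_if_strict:
  assumes sound: "induced Attrs V le F \<subseteq> R"
    and strict: "(x, y) \<in> strict_part R" and xy: "(x, y) \<in> induced Attrs V le F"
  shows "(x, y) \<in> induced Attrs V le (s_round Attrs V le F)"
proof -
  have tuples: "x \<in> tuples Attrs V" "y \<in> tuples Attrs V"
    using xy unfolding induced_def by auto
  obtain P where P: "P \<in> set F" "holds_stmt le P x y"
    using xy unfolding induced_def holds_formula_def by blast
  have "(y, x) \<notin> induced Attrs V le F"
    using sound strict unfolding strict_part_def by blast
  then have "\<not> holds_stmt le Pj y x" if "Pj \<in> set F" for Pj
    using that tuples unfolding induced_def holds_formula_def by blast
  then have "holds_stmt le (if impl_list Attrs V le F P = [] then P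
                           else refine_stmt P (impl_list Attrs V le F P)) x y"
    using P(2) by (simp add: holds_refine_stmt impl_list_def)
  moreover have "(if impl_list Attrs V le F P = [] then P
                 else refine_stmt P (impl_list Attrs V le F P)) \<in> set (s_round Attrs V le F)"
    unfolding s_round_def set_map using P(1) by (rule imageI)
  ultimately have "holds_formula le (s_round Attrs V le F) x y"
    unfolding holds_formula_def by blast
  then show ?thesis using tuples unfolding induced_def by blast
qed

lemma induced_s_rounds_between:
  "induced Attrs V le ((s_round Attrs V le ^^ n) F) \<subseteq> induced Attrs V le F \<and>
   strict_part (induced Attrs V le F) \<subseteq> induced Attrs V le ((s_round Attrs V le ^^ n) F)"
proof (induction n)
  case 0
  show ?case unfolding strict_part_def by auto
next
  case (Suc n)
  let ?R = "induced Attrs V le F" and ?F = "(s_round Attrs V le ^^ n) F"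
  have "induced Attrs V le (s_round Attrs V le ?F) \<subseteq> induced Attrs V le ?F"
    unfolding induced_def using holds_s_round_imp by blast
  moreover have "p \<in> induced Attrs V le (s_round Attrs V le ?F)" if "p \<in> strict_part ?R" for p
  proof (cases p)
    case (Pair x y)
    show ?thesis
      using holds_s_round_if_strict[of Attrs V le ?F ?R x y] Suc that Pair by blast
  qed
  ultimately show ?case using Suc by auto
qed

lemma S_step_induced_between:
  assumes "S_step Attrs V le F G"
  shows "induced Attrs V le G \<subseteq> induced Attrs V le F"
    and "strict_part (induced Attrs V le F) \<subseteq> induced Attrs V le G"
proof -
  obtain n where "G = cleanup Attrs V le ((s_round Attrs V le ^^ n) F)"
    using assms unfolding S_step_def by blast
  then have "induced Attrs V le G = induced Attrs V le ((s_round Attrs V le ^^ n) F)"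
    by (simp add: induced_cleanup)
  then show "induced Attrs V le G \<subseteq> induced Attrs V le F"
    and "strict_part (induced Attrs V le F) \<subseteq> induced Attrs V le G"
    using induced_s_rounds_between[of Attrs V le n F] by simp_all
qed

theorem mainTheorem4:
  fixes Attrs :: "'a set" and V :: "'a \<Rightarrow> 'v set" and le :: "'a \<Rightarrow> 'v \<Rightarrow> 'v \<Rightarrow> bool"
    and X :: "op list" and F0 G0 G1 G2 G3 :: "('a,'v) formula"
  assumes "taxonomies Attrs V le"
    and "wf_formula Attrs V le F0"
    and "apply_ops Attrs V le X F0 G0"
    and "T_step Attrs V le G0 G1"
    and "S_step Attrs V le G1 G2"
    and "T_step Attrs V le G2 G3"
  shows "strict_part (induced Attrs V le G1) \<subseteq> strict_part (induced Attrs V le G3)"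
proof -
  have "trans (induced Attrs V le G1)"
    using T_step_induced[OF assms(4)] by simp
  from trans_strict_part_subset_trancl[OF this S_step_induced_between(2,1)[OF assms(5)]]
  show ?thesis
    unfolding T_step_induced[OF assms(6)] .
qed

end
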